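(* Let $r\ge2$, let $\sigma_1,\dots,\sigma_r\in S_\infty$ be cycles with pairwise disjoint supports and let $(\rho_n)$ be a sequence of probability measures on $\mathbb{Y}_n$ such that $\lim_n n^{|\sigma_i|/2}M_{\rho_n}(\sigma_i)$ exists for each $i$. The following are equivalent: (1) for every $r'\ge1$ and every $\{\tau_1,\dots,\tau_{r'}\}\subseteq\{\sigma_1,\dots,\sigma_r\}$, $\lim_n n^{\sum_i|\tau_i|/2}\big(M_{\rho_n}(\prod_i\tau_i)-\prod_iM_{\rho_n}(\tau_i)\big)=0$; (2) for every $r'\ge2$ and every $\{\tau_1,\dots,\tau_{r'}\}\subseteq\{\sigma_1,\dots,\sigma_r\}$, $\lim_n n^{\sum_i|\tau_i|/2}\kappa_{\rho_n,r'}(\tau_1,\dots,\tau_{r'})=0$.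
   Context: $M_\rho(\sigma)=\sum_{\lambda\in\mathbb{Y}_n}\rho(\lambda)\chi_\lambda(\tau)/\dim\lambda$ if $\sigma\in S_\infty$ is conjugate to some $\tau\in S_n$, else $0$. $|\sigma|$ is the minimal number of transpositions with product $\sigma$. Permutation-cumulant: $\kappa_{\rho,r}(\tau_1,\dots,\tau_r)=\sum_{\pi}(-1)^{|\pi|-1}(|\pi|-1)!\prod_{B\in\pi}M_\rho(\prod_{j\in B}\tau_j)$ over set partitions $\pi$ of $\{1,\dots,r\}$. *)

theory Defs
  imports "HOL-Analysis.Analysis" "HOL-Combinatorics.Combinatorics"
begin

text \<open>S_infinity: finitary permutations of nat (0-based labels), i.e. the type nat perm.
  S_n is the subgroup of permutations moving only points in {..<n}.\<close>

definition in_Sn :: "nat \<Rightarrow> nat perm \<Rightarrow> bool" where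
  "in_Sn n \<tau> \<longleftrightarrow> affected \<tau> \<subseteq> {..<n}"

definition conj_perm :: "nat perm \<Rightarrow> nat perm \<Rightarrow> bool" where
  "conj_perm \<sigma> \<tau> \<longleftrightarrow> (\<exists>g. \<sigma> = g * \<tau> * inverse g)"

definition is_cycle :: "nat perm \<Rightarrow> bool" where
  "is_cycle \<sigma> \<longleftrightarrow> affected \<sigma> \<noteq> {} \<and> (\<forall>a\<in>affected \<sigma>. Perm.orbit \<sigma> a = affected \<sigma>)"

definition tlen :: "nat perm \<Rightarrow> nat" where
  "tlen \<sigma> = (LEAST k. \<exists>ts. length ts = k \<and> (\<forall>(a,b)\<in>set ts. a \<noteq> b) \<and>
                 \<sigma> = prod_list (map (\<lambda>(a,b). Perm.swap a b) ts))"

definition Young :: "nat \<Rightarrow> nat list set" where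
  "Young n = {la. sorted_wrt (\<ge>) la \<and> 0 \<notin> set la \<and> sum_list la = n}"

definition part :: "nat list \<Rightarrow> nat \<Rightarrow> nat" where
  "part la i = (if i < length la then la ! i else 0)"

text \<open>Irreducible character chi_lambda(tau) of S_n, tau in S_n, via the Frobenius formula
  chi_lambda(mu) = [x^(lambda+delta)] a_delta p_mu in n variables, delta_i = n-1-i,
  a_delta = sum_w sgn(w) prod_i x_i^(delta_(w i)), p_mu = prod over the cycles c of tau
  (on {..<n}, fixed points included) of p_(card c).\<close>
definition cycles_on :: "nat \<Rightarrow> nat perm \<Rightarrow> nat set set" where
  "cycles_on n \<tau> = (\<lambda>x. Perm.orbit \<tau> x) ` {..<n}"

definition chi :: "nat \<Rightarrow> nat list \<Rightarrow> nat perm \<Rightarrow> int" where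
  "chi n la \<tau> = (\<Sum>w\<in>{w. w permutes {..<n}}. sign w *
      int (card {f \<in> cycles_on n \<tau> \<rightarrow>\<^sub>E {..<n}.
         \<forall>i<n. part la i + (n - 1 - i) = (n - 1 - w i) + (\<Sum>c\<in>{c\<in>cycles_on n \<tau>. f c = i}. card c)}))"

definition dimY :: "nat \<Rightarrow> nat list \<Rightarrow> int" where
  "dimY n la = chi n la 1"

definition prob_on_Young :: "nat \<Rightarrow> (nat list \<Rightarrow> real) \<Rightarrow> bool" where
  "prob_on_Young n \<rho> \<longleftrightarrow> (\<forall>la\<in>Young n. \<rho> la \<ge> 0) \<and> (\<Sum>la\<in>Young n. \<rho> la) = 1"

definition Mrho :: "(nat list \<Rightarrow> real) \<Rightarrow> nat \<Rightarrow> nat perm \<Rightarrow> real" where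
  "Mrho \<rho> n \<sigma> = (if \<exists>\<tau>. in_Sn n \<tau> \<and> conj_perm \<sigma> \<tau> then
      (let \<tau> = (SOME \<tau>. in_Sn n \<tau> \<and> conj_perm \<sigma> \<tau>) in
        \<Sum>la\<in>Young n. \<rho> la * of_int (chi n la \<tau>) / of_int (dimY n la))
     else 0)"

definition kappa :: "(nat perm \<Rightarrow> real) \<Rightarrow> nat \<Rightarrow> (nat \<Rightarrow> nat perm) \<Rightarrow> real" where
  "kappa M r \<tau> = (\<Sum>\<pi>\<in>{\<pi>. partition_on {1..r} \<pi>}.
      (-1) ^ (card \<pi> - 1) * fact (card \<pi> - 1) *
      (\<Prod>B\<in>\<pi>. M (prod_list (map \<tau> (sorted_list_of_set B)))))"

end

theory Submission
  imports Defs
begin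

(* Normalise the moments: for a word j_1 ... j_k of indices let
   F_n(j_1 ... j_k) = n^((|sigma_j_1| + ... + |sigma_j_k|)/2) M_rho_n(sigma_j_1 ... sigma_j_k).
   The normalising factor is multiplicative over the blocks of a set partition, so the normalised
   cumulant in (2) is the cumulant of the functional F_n, while (1) says that F_n(j_1 ... j_k) tends to
   the product of the limits of the single normalised moments. The theorem is therefore an instance of
   a fact about any sequence of functionals on words: the moments factorise in the limit iff all
   cumulants of order at least 2 vanish in the limit.

   Both directions rest on the Moebius identity: the sum of (-1)^(|pi| - 1) (|pi| - 1)! over the set
   partitions pi of a set with at least two elements is 0. It follows from the recursion obtained by
   inserting a new point into a partition, either as a new block or into one of the existing blocks.
   If the moments factorise, all terms of a cumulant tend to the same product with Moebius weights, so
   the cumulant tends to 0. Conversely, by induction on the order, a moment is its cumulant minus the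
   contributions of the nontrivial partitions, and by the identity these tend to minus the product. *)

lemma disjnt_Union_others: "partition_on A P \<Longrightarrow> B \<in> P \<Longrightarrow> disjnt B (\<Union>(P - {B}))"
  unfolding partition_on_def pairwise_def disjnt_def by blast

lemma partition_on_space_unique:
  assumes "partition_on A P" "A \<in> P"
  shows "P = {A}"
proof -
  have "B = A" if "B \<in> P" for B
  proof (rule ccontr)
    assume "B \<noteq> A"
    then have "disjnt B A" using pairwiseD[OF partition_onD2[OF assms(1)] that assms(2)] by blast
    moreover have "B \<subseteq> A" using partition_onD1[OF assms(1)] that by blast
    ultimately have "B = {}" by (auto simp: disjnt_def)
    then show False using partition_onD3[OF assms(1)] that by simp
  qed
  then show ?thesis using assms(2) by blast
qed

definition partition_extensions :: "'a \<Rightarrow> 'a set set \<Rightarrow> 'a set set set" where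
  "partition_extensions a P = insert (insert {a} P) ((\<lambda>B. insert (insert a B) (P - {B})) ` P)"

lemma partition_on_partition_extensions:
  assumes P: "partition_on A P" and a: "a \<notin> A" and Q: "Q \<in> partition_extensions a P"
  shows "partition_on (insert a A) Q"
proof -
  have aP: "a \<notin> \<Union>P" using partition_onD1[OF P] a by blast
  show ?thesis
  proof (cases "Q = insert {a} P")
    case True
    then show ?thesis using partition_on_insert[of "{a}" P "insert a A"] aP P a by (simp add: disjnt_def)
  next
    case False
    then obtain B where B: "B \<in> P" "Q = insert (insert a B) (P - {B})"
      using Q unfolding partition_extensions_def by blast
    have "disjnt B (\<Union>(P - {B}))"
      using disjnt_Union_others[OF P B(1)] .
    then have disj: "disjnt (insert a B) (\<Union>(P - {B}))" using aP by (auto simp: disjnt_def)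
    have "partition_on (A - B) (P - {B})"
      using partition_on_insert[OF \<open>disjnt B _\<close>] P B(1) by (simp add: insert_absorb)
    moreover have "insert a A - insert a B = A - B" using a by blast
    moreover have "B \<subseteq> A" using partition_onD1[OF P] B(1) by blast
    ultimately show ?thesis
      unfolding B(2) partition_on_insert[OF disj] by auto
  qed
qed

lemma restrict_partition_extensions:
  assumes P: "partition_on A P" and a: "a \<notin> A" and Q: "Q \<in> partition_extensions a P"
  shows "(\<inter>) A ` Q - {{}} = P"
proof -
  have inter_A: "A \<inter> B = B" if "B \<in> P" for B
    using partition_onD1[OF P] that by blast
  then have restrict_P: "(\<inter>) A ` P' = P'" if "P' \<subseteq> P" for P'
    using that by (simp add: subset_iff image_cong)
  have "{} \<notin> P" using partition_onD3[OF P] .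
  show ?thesis
  proof (cases "Q = insert {a} P")
    case True
    then show ?thesis using restrict_P[of P] a \<open>{} \<notin> P\<close> by auto
  next
    case False
    then obtain B where B: "B \<in> P" "Q = insert (insert a B) (P - {B})"
      using Q unfolding partition_extensions_def by blast
    have "A \<inter> insert a B = B" using a inter_A[OF B(1)] by blast
    then show ?thesis using restrict_P[of "P - {B}"] B \<open>{} \<notin> P\<close> by auto
  qed
qed

lemma mem_partition_extensions_restrict:
  assumes Q: "partition_on (insert a A) Q" and a: "a \<notin> A"
  shows "Q \<in> partition_extensions a ((\<inter>) A ` Q - {{}})"
proof -
  obtain X where X: "X \<in> Q" "a \<in> X" using partition_onD1[OF Q] by blast
  have "{} \<notin> Q" using partition_onD3[OF Q] .
  have others: "A \<inter> Y = Y" "X \<inter> Y = {}" if Y: "Y \<in> Q - {X}" for Y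
  proof -
    show disj: "X \<inter> Y = {}" using partition_onD2[OF Q] X(1) Y by (auto simp: pairwise_def disjnt_def)
    have "Y \<subseteq> insert a A" using Union_upper[of Y Q] partition_onD1[OF Q] Y by simp
    then show "A \<inter> Y = Y" using disj X(2) by blast
  qed
  define P where "P = (\<inter>) A ` Q - {{}}"
  have "(\<inter>) A ` (Q - {X}) = Q - {X}"
    using others(1) by (intro image_cong[of _ _ _ id, simplified]) auto
  moreover have "A \<inter> X = X - {a}"
    using Union_upper[OF X(1)] partition_onD1[OF Q] a by auto
  ultimately have P: "P = insert (X - {a}) (Q - {X}) - {{}}"
    unfolding P_def using X(1) by (metis image_insert insert_Diff)
  show ?thesis
    unfolding P_def[symmetric]
  proof (cases "X = {a}")
    case True
    then have "P = Q - {X}" using P \<open>{} \<notin> Q\<close> by auto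
    then have "Q = insert {a} P" using True X(1) by auto
    then show "Q \<in> partition_extensions a P" by (simp add: partition_extensions_def)
  next
    case False
    define B where "B = X - {a}"
    have "B \<noteq> {}" using False X(2) B_def by blast
    then have "B \<notin> Q - {X}" using others(2) B_def by blast
    then have "P - {B} = Q - {X}" using P \<open>{} \<notin> Q\<close> B_def by auto
    moreover have "insert a B = X" using X(2) B_def by blast
    ultimately have "Q = insert (insert a B) (P - {B})" using X(1) by auto
    moreover have "B \<in> P" using P \<open>B \<noteq> {}\<close> B_def by blast
    ultimately show "Q \<in> partition_extensions a P" by (simp add: partition_extensions_def)
  qed
qed

lemma sum_partition_extensions:
  fixes h :: "nat \<Rightarrow> 'b::comm_semiring_1"
  assumes P: "partition_on A P" and a: "a \<notin> A" and "finite A"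
  shows "(\<Sum>Q\<in>partition_extensions a P. h (card Q)) = h (card P + 1) + of_nat (card P) * h (card P)"
proof -
  define join where "join B = insert (insert a B) (P - {B})" for B
  have "finite P" using finite_elements[OF \<open>finite A\<close> P] .
  have aP: "a \<notin> B" "B \<noteq> {}" if "B \<in> P" for B
    using partition_onD1[OF P] partition_onD3[OF P] a that by blast+
  have notP: "insert a B \<notin> P" if "B \<in> P" for B
    using aP by blast
  have "inj_on join P"
  proof (rule inj_onI)
    fix B B' assume "B \<in> P" "B' \<in> P" "join B = join B'"
    then have "insert a B \<in> insert (insert a B') (P - {B'})" unfolding join_def by blast
    then have "insert a B = insert a B'" using notP[OF \<open>B \<in> P\<close>] by blast
    then show "B = B'" using aP(1) \<open>B \<in> P\<close> \<open>B' \<in> P\<close> by (simp add: insert_ident)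
  qed
  moreover have "insert {a} P \<notin> join ` P"
  proof
    assume "insert {a} P \<in> join ` P"
    then obtain B where "B \<in> P" "{a} \<in> join B" by (auto simp: join_def)
    then show False using aP unfolding join_def by blast
  qed
  moreover have "card (join B) = card P" if "B \<in> P" for B
    using that aP \<open>finite P\<close> card_gt_0_iff[of P]
    by (auto simp: join_def card_insert_if card_Diff_singleton)
  moreover have "card (insert {a} P) = card P + 1"
    using aP \<open>finite P\<close> by (auto simp: card_insert_if)
  ultimately show ?thesis
    using \<open>finite P\<close> unfolding partition_extensions_def join_def[symmetric]
    by (simp add: sum.reindex)
qed

lemma partitions_insert_eq:
  assumes "a \<notin> A"
  shows "{Q. partition_on (insert a A) Q} = (\<Union>P\<in>{P. partition_on A P}. partition_extensions a P)"
proof (intro equalityI subsetI)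
  fix Q assume "Q \<in> {Q. partition_on (insert a A) Q}"
  then have Q: "partition_on (insert a A) Q" by simp
  have "partition_on A ((\<inter>) A ` Q - {{}})"
    using partition_on_restrict[OF Q, of A] by (simp add: Int_absorb2 subset_insertI)
  then show "Q \<in> (\<Union>P\<in>{P. partition_on A P}. partition_extensions a P)"
    using mem_partition_extensions_restrict[OF Q assms] by blast
next
  fix Q assume "Q \<in> (\<Union>P\<in>{P. partition_on A P}. partition_extensions a P)"
  then obtain P where "partition_on A P" "Q \<in> partition_extensions a P" by blast
  then show "Q \<in> {Q. partition_on (insert a A) Q}" using partition_on_partition_extensions[OF _ assms] by simp
qed

lemma sum_partitions_insert:
  fixes h :: "nat \<Rightarrow> 'b::comm_semiring_1"
  assumes "finite A" "a \<notin> A"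
  shows "(\<Sum>Q | partition_on (insert a A) Q. h (card Q))
       = (\<Sum>P | partition_on A P. h (card P + 1) + of_nat (card P) * h (card P))"
proof -
  have "(\<Sum>Q | partition_on (insert a A) Q. h (card Q))
      = (\<Sum>P | partition_on A P. \<Sum>Q\<in>partition_extensions a P. h (card Q))"
    unfolding partitions_insert_eq[OF assms(2)]
  proof (rule sum.UNION_disjoint)
    show "finite {P. partition_on A P}" using finitely_many_partition_on[OF assms(1)] .
    show "\<forall>P\<in>{P. partition_on A P}. finite (partition_extensions a P)"
      using finite_elements[OF assms(1)] by (simp add: partition_extensions_def)
    show "\<forall>P\<in>{P. partition_on A P}. \<forall>P'\<in>{P. partition_on A P}. P \<noteq> P' \<longrightarrow>
        partition_extensions a P \<inter> partition_extensions a P' = {}"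
      using restrict_partition_extensions[OF _ assms(2)] by blast
  qed
  also have "\<dots> = (\<Sum>P | partition_on A P. h (card P + 1) + of_nat (card P) * h (card P))"
    using sum_partition_extensions[OF _ assms(2,1)] by (intro sum.cong) auto
  finally show ?thesis .
qed

lemma sum_partitions_moebius_eq_0:
  assumes "finite A" "card A \<ge> 2"
  shows "(\<Sum>P | partition_on A P. (-1::'a::{comm_ring_1,ring_char_0}) ^ (card P - 1) * fact (card P - 1)) = 0"
proof -
  obtain a where "a \<in> A" using assms by fastforce
  define A' where "A' = A - {a}"
  have "\<not> A \<subseteq> {a}" using card_mono[of "{a}" A] assms(2) by auto
  then have A: "A = insert a A'" "a \<notin> A'" "finite A'" "A' \<noteq> {}"
    using \<open>a \<in> A\<close> assms(1) unfolding A'_def by auto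
  have cancel: "(-1::'a) ^ (card P + 1 - 1) * fact (card P + 1 - 1)
      + of_nat (card P) * ((-1) ^ (card P - 1) * fact (card P - 1)) = 0"
    if "partition_on A' P" for P
  proof -
    have "card P \<noteq> 0"
      using that A(3,4) finite_elements partition_onD1 by fastforce
    then obtain m where "card P = Suc m" using not0_implies_Suc by blast
    then show ?thesis by (simp add: fact_Suc)
  qed
  show ?thesis
    unfolding A(1) sum_partitions_insert[OF A(3,2), of "\<lambda>k. (-1::'a) ^ (k - 1) * fact (k - 1)"]
    using cancel by (intro sum.neutral) simp
qed

definition cumulant :: "('a list \<Rightarrow> real) \<Rightarrow> nat \<Rightarrow> (nat \<Rightarrow> 'a) \<Rightarrow> real" where
  "cumulant F k g = (\<Sum>\<pi> | partition_on {1..k} \<pi>. (-1) ^ (card \<pi> - 1) * fact (card \<pi> - 1) *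
      (\<Prod>B\<in>\<pi>. F (map g (sorted_list_of_set B))))"

lemma kappa_comp_eq_cumulant: "kappa M k (\<sigma> \<circ> g) = cumulant (\<lambda>xs. M (prod_list (map \<sigma> xs))) k g"
  unfolding kappa_def cumulant_def by simp

lemma cumulant_scale:
  "cumulant (\<lambda>xs. prod_list (map \<omega> xs) * F xs) k g = (\<Prod>j=1..k. \<omega> (g j)) * cumulant F k g"
proof -
  have "(\<Prod>B\<in>\<pi>. prod_list (map \<omega> (map g (sorted_list_of_set B)))) = (\<Prod>j=1..k. \<omega> (g j))"
    if \<pi>: "partition_on {1..k} \<pi>" for \<pi>
  proof -
    have "finite B" if "B \<in> \<pi>" for B
      using partition_onD1[OF \<pi>] that by (metis Union_upper finite_atLeastAtMost finite_subset)
    then have "(\<Prod>B\<in>\<pi>. prod_list (map \<omega> (map g (sorted_list_of_set B)))) = (\<Prod>B\<in>\<pi>. \<Prod>j\<in>B. \<omega> (g j))"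
      by (intro prod.cong refl) (simp add: prod.distinct_set_conv_list[symmetric])
    also have "\<dots> = (\<Prod>j=1..k. \<omega> (g j))"
      using prod.partition[OF finite_atLeastAtMost \<pi>, where g="\<lambda>j. \<omega> (g j)"] by simp
    finally show ?thesis .
  qed
  then show ?thesis
    unfolding cumulant_def sum_distrib_left by (intro sum.cong refl) (simp add: prod.distrib)
qed

definition moments_factorize :: "(nat \<Rightarrow> 'a list \<Rightarrow> real) \<Rightarrow> ('a \<Rightarrow> real) \<Rightarrow> 'a set \<Rightarrow> nat \<Rightarrow> bool" where
  "moments_factorize F c S k \<longleftrightarrow> (\<forall>g. inj_on g {1..k} \<and> g ` {1..k} \<subseteq> S \<longrightarrow>
      (\<lambda>n. F n (map g [1..<k+1])) \<longlonglongrightarrow> (\<Prod>j=1..k. c (g j)))"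

definition cumulants_vanish :: "(nat \<Rightarrow> 'a list \<Rightarrow> real) \<Rightarrow> 'a set \<Rightarrow> nat \<Rightarrow> bool" where
  "cumulants_vanish F S k \<longleftrightarrow> (\<forall>g. inj_on g {1..k} \<and> g ` {1..k} \<subseteq> S \<longrightarrow>
      (\<lambda>n. cumulant (F n) k g) \<longlonglongrightarrow> 0)"

lemma moments_factorize_distinct_list:
  assumes "moments_factorize F c S (length xs)" "distinct xs" "set xs \<subseteq> S"
  shows "(\<lambda>n. F n xs) \<longlonglongrightarrow> (\<Prod>j\<in>set xs. c j)"
proof -
  define e where "e i = xs ! (i - 1)" for i
  have map_e: "map e [1..<length xs + 1] = xs"
    unfolding e_def by (rule nth_equalityI) (auto simp del: upt_Suc)
  have set_upt: "set [1..<length xs + 1] = {1..length xs}" by auto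
  have "inj_on e (set [1..<length xs + 1])"
    using distinct_map[of e] map_e assms(2) by metis
  moreover have "e ` set [1..<length xs + 1] = set xs"
    using arg_cong[OF map_e, of set] by simp
  ultimately have e: "inj_on e {1..length xs}" "e ` {1..length xs} = set xs"
    unfolding set_upt by simp_all
  from e have "(\<lambda>n. F n (map e [1..<length xs + 1])) \<longlonglongrightarrow> (\<Prod>i=1..length xs. c (e i))"
    using assms(1,3) unfolding moments_factorize_def by blast
  moreover have "(\<Prod>i=1..length xs. c (e i)) = (\<Prod>j\<in>set xs. c j)"
    using prod.reindex[OF e(1), of c] e(2) by simp
  ultimately show ?thesis using map_e by simp
qed

lemma block_moment_tendsto:
  assumes "moments_factorize F c S (card B)" "finite B" "inj_on g B" "g ` B \<subseteq> S"
  shows "(\<lambda>n. F n (map g (sorted_list_of_set B))) \<longlonglongrightarrow> (\<Prod>j\<in>B. c (g j))"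
proof -
  have "length (map g (sorted_list_of_set B)) = card B" "distinct (map g (sorted_list_of_set B))"
    "set (map g (sorted_list_of_set B)) = g ` B"
    using assms(2,3) by (simp_all add: distinct_map)
  then show ?thesis
    using moments_factorize_distinct_list[of F c S "map g (sorted_list_of_set B)"] assms(1,3,4)
    by (simp add: prod.reindex)
qed

lemma moebius_sum_tendsto:
  fixes k :: nat and F :: "nat \<Rightarrow> 'a list \<Rightarrow> real"
  assumes "Ps \<subseteq> {\<pi>. partition_on {1..k} \<pi>}"
    and "\<And>\<pi> B. \<pi> \<in> Ps \<Longrightarrow> B \<in> \<pi> \<Longrightarrow> (\<lambda>n. F n (map g (sorted_list_of_set B))) \<longlonglongrightarrow> (\<Prod>j\<in>B. c (g j))"
  shows "(\<lambda>n. \<Sum>\<pi>\<in>Ps. (-1) ^ (card \<pi> - 1) * fact (card \<pi> - 1) *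
            (\<Prod>B\<in>\<pi>. F n (map g (sorted_list_of_set B))))
      \<longlonglongrightarrow> (\<Sum>\<pi>\<in>Ps. (-1) ^ (card \<pi> - 1) * fact (card \<pi> - 1)) * (\<Prod>j=1..k. c (g j))"
proof -
  have "(\<lambda>n. \<Sum>\<pi>\<in>Ps. (-1) ^ (card \<pi> - 1) * fact (card \<pi> - 1) *
            (\<Prod>B\<in>\<pi>. F n (map g (sorted_list_of_set B))))
      \<longlonglongrightarrow> (\<Sum>\<pi>\<in>Ps. (-1) ^ (card \<pi> - 1) * fact (card \<pi> - 1) * (\<Prod>B\<in>\<pi>. \<Prod>j\<in>B. c (g j)))"
    by (intro tendsto_sum tendsto_mult tendsto_const tendsto_prod) (use assms(2) in auto)
  also have "(\<Sum>\<pi>\<in>Ps. (-1) ^ (card \<pi> - 1) * fact (card \<pi> - 1) * (\<Prod>B\<in>\<pi>. \<Prod>j\<in>B. c (g j)))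
      = (\<Sum>\<pi>\<in>Ps. (-1) ^ (card \<pi> - 1) * fact (card \<pi> - 1)) * (\<Prod>j=1..k. c (g j))"
    unfolding sum_distrib_right
    using assms(1) prod.partition[OF finite_atLeastAtMost, where g="\<lambda>j. c (g j)"]
    by (intro sum.cong refl) auto
  finally show ?thesis .
qed

lemma cumulants_vanish_if_moments_factorize:
  assumes "k \<ge> 2" and factorize: "\<And>m. 1 \<le> m \<Longrightarrow> m \<le> k \<Longrightarrow> moments_factorize F c S m"
  shows "cumulants_vanish F S k"
  unfolding cumulants_vanish_def
proof (intro allI impI)
  fix g assume g: "inj_on g {1..k} \<and> g ` {1..k} \<subseteq> S"
  have moebius: "(\<Sum>\<pi> | partition_on {1..k} \<pi>. (-1::real) ^ (card \<pi> - 1) * fact (card \<pi> - 1)) = 0"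
    by (rule sum_partitions_moebius_eq_0) (use assms(1) in simp_all)
  have "(\<lambda>n. cumulant (F n) k g)
      \<longlonglongrightarrow> (\<Sum>\<pi> | partition_on {1..k} \<pi>. (-1) ^ (card \<pi> - 1) * fact (card \<pi> - 1)) * (\<Prod>j=1..k. c (g j))"
    unfolding cumulant_def
  proof (rule moebius_sum_tendsto)
    fix \<pi> B assume "\<pi> \<in> {\<pi>. partition_on {1..k} \<pi>}" "B \<in> \<pi>"
    then have B: "B \<subseteq> {1..k}" "B \<noteq> {}"
      using partition_onD1 partition_onD3 by blast+
    have "finite B" using finite_subset[OF B(1)] by simp
    then have "1 \<le> card B" using B(2) by (simp add: Suc_le_eq card_gt_0_iff)
    moreover have "card B \<le> k" using card_mono[OF _ B(1)] by simp
    ultimately have "moments_factorize F c S (card B)" by (rule factorize)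
    moreover have "inj_on g B" using inj_on_subset[OF conjunct1[OF g] B(1)] .
    moreover have "g ` B \<subseteq> S" using subset_trans[OF image_mono[OF B(1)] conjunct2[OF g]] .
    ultimately show "(\<lambda>n. F n (map g (sorted_list_of_set B))) \<longlonglongrightarrow> (\<Prod>j\<in>B. c (g j))"
      using \<open>finite B\<close> by (intro block_moment_tendsto)
  qed simp
  then show "(\<lambda>n. cumulant (F n) k g) \<longlonglongrightarrow> 0"
    unfolding moebius by simp
qed

lemma moments_factorize_if_cumulants_vanish:
  assumes "k \<ge> 2" and vanish: "cumulants_vanish F S k"
    and factorize: "\<And>m. 1 \<le> m \<Longrightarrow> m < k \<Longrightarrow> moments_factorize F c S m"
  shows "moments_factorize F c S k"
  unfolding moments_factorize_def
proof (intro allI impI)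
  fix g assume g: "inj_on g {1..k} \<and> g ` {1..k} \<subseteq> S"
  define Ps where "Ps = {\<pi>. partition_on {1..k} \<pi>} - {{{1..k}}}"
  define t where "t n \<pi> = (-1) ^ (card \<pi> - 1) * fact (card \<pi> - 1) *
      (\<Prod>B\<in>\<pi>. F n (map g (sorted_list_of_set B)))" for n \<pi>
  have finite: "finite {\<pi>. partition_on {1..k} \<pi>}"
    by (simp add: finitely_many_partition_on)
  have space: "{{1..k}} \<in> {\<pi>. partition_on {1..k} \<pi>}"
    using assms(1) by (simp add: partition_on_space)
  have "{1..k} = {1..<k+1}" by auto
  then have "t n {{1..k}} = F n (map g [1..<k+1])" for n
    unfolding t_def by simp
  moreover have "cumulant (F n) k g = t n {{1..k}} + (\<Sum>\<pi>\<in>Ps. t n \<pi>)" for n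
    unfolding cumulant_def t_def[symmetric] Ps_def by (rule sum.remove[OF finite space])
  ultimately have split: "cumulant (F n) k g = F n (map g [1..<k+1]) + (\<Sum>\<pi>\<in>Ps. t n \<pi>)" for n
    by simp
  have rest: "(\<lambda>n. \<Sum>\<pi>\<in>Ps. t n \<pi>)
      \<longlonglongrightarrow> (\<Sum>\<pi>\<in>Ps. (-1) ^ (card \<pi> - 1) * fact (card \<pi> - 1)) * (\<Prod>j=1..k. c (g j))"
    unfolding t_def
  proof (rule moebius_sum_tendsto)
    fix \<pi> B assume "\<pi> \<in> Ps" "B \<in> \<pi>"
    then have \<pi>: "partition_on {1..k} \<pi>" "\<pi> \<noteq> {{1..k}}" unfolding Ps_def by auto
    have B: "B \<subseteq> {1..k}" "B \<noteq> {}" "B \<noteq> {1..k}"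
      using partition_onD1[OF \<pi>(1)] partition_onD3[OF \<pi>(1)] partition_on_space_unique[OF \<pi>(1)] \<pi>(2)
        \<open>B \<in> \<pi>\<close> by blast+
    have "finite B" using finite_subset[OF B(1)] by simp
    then have "1 \<le> card B" using B(2) by (simp add: Suc_le_eq card_gt_0_iff)
    moreover have "card B < k" using psubset_card_mono[of "{1..k}" B] B(1,3) by auto
    ultimately have "moments_factorize F c S (card B)" by (rule factorize)
    moreover have "inj_on g B" using inj_on_subset[OF conjunct1[OF g] B(1)] .
    moreover have "g ` B \<subseteq> S" using subset_trans[OF image_mono[OF B(1)] conjunct2[OF g]] .
    ultimately show "(\<lambda>n. F n (map g (sorted_list_of_set B))) \<longlonglongrightarrow> (\<Prod>j\<in>B. c (g j))"
      using \<open>finite B\<close> by (intro block_moment_tendsto)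
  qed (simp add: Ps_def)
  have "(\<Sum>\<pi>\<in>Ps. (-1::real) ^ (card \<pi> - 1) * fact (card \<pi> - 1)) = -1"
    using sum_partitions_moebius_eq_0[of "{1..k}", where 'a=real] assms(1)
    unfolding Ps_def sum.remove[OF finite space] by (simp add: add_eq_0_iff)
  then have "(\<lambda>n. cumulant (F n) k g - (\<Sum>\<pi>\<in>Ps. t n \<pi>)) \<longlonglongrightarrow> 0 - (- (\<Prod>j=1..k. c (g j)))"
    using vanish g rest unfolding cumulants_vanish_def by (intro tendsto_diff) auto
  then show "(\<lambda>n. F n (map g [1..<k+1])) \<longlonglongrightarrow> (\<Prod>j=1..k. c (g j))"
    unfolding split by simp
qed

theorem moments_factorize_iff_cumulants_vanish:
  assumes "\<And>j. j \<in> S \<Longrightarrow> (\<lambda>n. F n [j]) \<longlonglongrightarrow> c j"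
  shows "(\<forall>k\<ge>1. moments_factorize F c S k) \<longleftrightarrow> (\<forall>k\<ge>2. cumulants_vanish F S k)"
proof
  assume "\<forall>k\<ge>1. moments_factorize F c S k"
  then show "\<forall>k\<ge>2. cumulants_vanish F S k"
    using cumulants_vanish_if_moments_factorize by blast
next
  assume vanish: "\<forall>k\<ge>2. cumulants_vanish F S k"
  have "moments_factorize F c S k" if "k \<ge> 1" for k
    using that
  proof (induction k rule: less_induct)
    case (less k)
    show ?case
    proof (cases "k = 1")
      case True
      then show ?thesis using assms unfolding moments_factorize_def by simp
    next
      case False
      then have "k \<ge> 2" using less.prems by simp
      then show ?thesis
        by (rule moments_factorize_if_cumulants_vanish) (use vanish less.IH \<open>k \<ge> 2\<close> in auto)
    qed
  qed
  then show "\<forall>k\<ge>1. moments_factorize F c S k" by blast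
qed


definition scaled_moment :: "(nat \<Rightarrow> nat perm \<Rightarrow> real) \<Rightarrow> ('a \<Rightarrow> nat perm) \<Rightarrow> nat \<Rightarrow> 'a list \<Rightarrow> real" where
  "scaled_moment M \<sigma> n xs =
     prod_list (map (\<lambda>j. real n powr (real (tlen (\<sigma> j)) / 2)) xs) * M n (prod_list (map \<sigma> xs))"

lemma prod_powr_half:
  fixes x :: real
  assumes "x > 0"
  shows "(\<Prod>j\<in>A. x powr (real (w j) / 2)) = x powr (real (\<Sum>j\<in>A. w j) / 2)"
  using assms by (simp add: powr_sum sum_divide_distrib)

lemma scaled_moment_upt:
  assumes "n > 0"
  shows "scaled_moment M \<sigma> n (map g [1..<k+1])
    = real n powr (real (\<Sum>j=1..k. tlen (\<sigma> (g j))) / 2) * M n (prod_list (map (\<sigma> \<circ> g) [1..<k+1]))"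
proof -
  have "set [1..<k+1] = {1..k}" by auto
  then have "prod_list (map (\<lambda>j. real n powr (real (tlen (\<sigma> (g j))) / 2)) [1..<k+1])
      = (\<Prod>j=1..k. real n powr (real (tlen (\<sigma> (g j))) / 2))"
    using prod.distinct_set_conv_list[OF distinct_upt, of _ 1 "k+1"] by metis
  then show ?thesis
    unfolding scaled_moment_def prod_powr_half[OF of_nat_0_less_iff[THEN iffD2, OF assms]]
    by (simp only: map_map comp_def)
qed

lemma scaled_moment_defect_tendsto_0_iff:
  assumes "\<And>j. j \<in> {1..k} \<Longrightarrow> (\<lambda>n. scaled_moment M \<sigma> n [g j]) \<longlonglongrightarrow> c (g j)"
  shows "(\<lambda>n. real n powr (real (\<Sum>j=1..k. tlen (\<sigma> (g j))) / 2) *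
            (M n (prod_list (map (\<sigma> \<circ> g) [1..<k+1])) - (\<Prod>j=1..k. M n (\<sigma> (g j))))) \<longlonglongrightarrow> 0
    \<longleftrightarrow> (\<lambda>n. scaled_moment M \<sigma> n (map g [1..<k+1])) \<longlonglongrightarrow> (\<Prod>j=1..k. c (g j))"
proof -
  have "\<forall>\<^sub>F n in sequentially. real n powr (real (\<Sum>j=1..k. tlen (\<sigma> (g j))) / 2) *
            (M n (prod_list (map (\<sigma> \<circ> g) [1..<k+1])) - (\<Prod>j=1..k. M n (\<sigma> (g j))))
      = scaled_moment M \<sigma> n (map g [1..<k+1]) - (\<Prod>j=1..k. scaled_moment M \<sigma> n [g j])"
    using eventually_gt_at_top[of 0]
  proof eventually_elim
    case (elim n)
    have factors: "(\<Prod>j=1..k. scaled_moment M \<sigma> n [g j]) = real n powr (real (\<Sum>j=1..k. tlen (\<sigma> (g j))) / 2) *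
        (\<Prod>j=1..k. M n (\<sigma> (g j)))"
      unfolding prod_powr_half[OF of_nat_0_less_iff[THEN iffD2, OF elim], symmetric]
      by (simp add: scaled_moment_def prod.distrib)
    show ?case unfolding scaled_moment_upt[OF elim] factors by (rule right_diff_distrib)
  qed
  note defect = tendsto_cong[OF this]
  have factors: "(\<lambda>n. \<Prod>j=1..k. scaled_moment M \<sigma> n [g j]) \<longlonglongrightarrow> (\<Prod>j=1..k. c (g j))"
    using assms by (rule tendsto_prod)
  show ?thesis
    unfolding defect
  proof
    assume "(\<lambda>n. scaled_moment M \<sigma> n (map g [1..<k+1]) - (\<Prod>j=1..k. scaled_moment M \<sigma> n [g j])) \<longlonglongrightarrow> 0"
    then show "(\<lambda>n. scaled_moment M \<sigma> n (map g [1..<k+1])) \<longlonglongrightarrow> (\<Prod>j=1..k. c (g j))"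
      by (rule Lim_transform[OF factors])
  next
    assume "(\<lambda>n. scaled_moment M \<sigma> n (map g [1..<k+1])) \<longlonglongrightarrow> (\<Prod>j=1..k. c (g j))"
    from tendsto_diff[OF this factors]
    show "(\<lambda>n. scaled_moment M \<sigma> n (map g [1..<k+1]) - (\<Prod>j=1..k. scaled_moment M \<sigma> n [g j])) \<longlonglongrightarrow> 0"
      by simp
  qed
qed

lemma scaled_kappa_eq_cumulant:
  assumes "n > 0"
  shows "real n powr (real (\<Sum>j=1..k. tlen (\<sigma> (g j))) / 2) * kappa (M n) k (\<sigma> \<circ> g)
    = cumulant (scaled_moment M \<sigma> n) k g"
  unfolding scaled_moment_def[abs_def] cumulant_scale kappa_comp_eq_cumulant
    prod_powr_half[OF of_nat_0_less_iff[THEN iffD2, OF assms]] ..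

theorem mainTheorem14:
  fixes r :: nat and \<sigma> :: "nat \<Rightarrow> nat perm" and \<rho> :: "nat \<Rightarrow> nat list \<Rightarrow> real"
  assumes "r \<ge> 2"
    and "\<forall>i\<in>{1..r}. is_cycle (\<sigma> i)"
    and "\<forall>i\<in>{1..r}. \<forall>j\<in>{1..r}. i \<noteq> j \<longrightarrow> affected (\<sigma> i) \<inter> affected (\<sigma> j) = {}"
    and "\<forall>n. prob_on_Young n (\<rho> n)"
    and "\<forall>i\<in>{1..r}. convergent (\<lambda>n. real n powr (real (tlen (\<sigma> i)) / 2) * Mrho (\<rho> n) n (\<sigma> i))"
  shows "(\<forall>r'\<ge>1. \<forall>g. inj_on g {1..r'} \<and> g ` {1..r'} \<subseteq> {1..r} \<longrightarrow>
            (\<lambda>n. real n powr (real (\<Sum>j=1..r'. tlen (\<sigma> (g j))) / 2) *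
               (Mrho (\<rho> n) n (prod_list (map (\<sigma> \<circ> g) [1..<r'+1]))
                - (\<Prod>j=1..r'. Mrho (\<rho> n) n (\<sigma> (g j))))) \<longlonglongrightarrow> 0)
     \<longleftrightarrow>
         (\<forall>r'\<ge>2. \<forall>g. inj_on g {1..r'} \<and> g ` {1..r'} \<subseteq> {1..r} \<longrightarrow>
            (\<lambda>n. real n powr (real (\<Sum>j=1..r'. tlen (\<sigma> (g j))) / 2) *
               kappa (Mrho (\<rho> n) n) r' (\<sigma> \<circ> g)) \<longlonglongrightarrow> 0)"
proof -
  define F where "F = scaled_moment (\<lambda>n. Mrho (\<rho> n) n) \<sigma>"
  define c where "c j = lim (\<lambda>n. F n [j])" for j
  have single: "(\<lambda>n. F n [j]) \<longlonglongrightarrow> c j" if "j \<in> {1..r}" for j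
    using assms(5) that unfolding c_def F_def scaled_moment_def by (simp add: convergent_LIMSEQ_iff)
  have moments: "(inj_on g {1..k} \<and> g ` {1..k} \<subseteq> {1..r} \<longrightarrow>
         (\<lambda>n. real n powr (real (\<Sum>j=1..k. tlen (\<sigma> (g j))) / 2) *
            (Mrho (\<rho> n) n (prod_list (map (\<sigma> \<circ> g) [1..<k+1]))
             - (\<Prod>j=1..k. Mrho (\<rho> n) n (\<sigma> (g j))))) \<longlonglongrightarrow> 0)
      \<longleftrightarrow> (inj_on g {1..k} \<and> g ` {1..k} \<subseteq> {1..r} \<longrightarrow>
         (\<lambda>n. F n (map g [1..<k+1])) \<longlonglongrightarrow> (\<Prod>j=1..k. c (g j)))"
    (is "(_ \<longrightarrow> ?defect) \<longleftrightarrow> (_ \<longrightarrow> ?factorize)") for k g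
  proof (rule imp_cong[OF refl])
    assume "inj_on g {1..k} \<and> g ` {1..k} \<subseteq> {1..r}"
    then have "(\<lambda>n. F n [g j]) \<longlonglongrightarrow> c (g j)" if "j \<in> {1..k}" for j
      using single that by blast
    then show "?defect \<longleftrightarrow> ?factorize" unfolding F_def by (rule scaled_moment_defect_tendsto_0_iff)
  qed
  have cumulants: "(\<lambda>n. real n powr (real (\<Sum>j=1..k. tlen (\<sigma> (g j))) / 2) *
        kappa (Mrho (\<rho> n) n) k (\<sigma> \<circ> g)) \<longlonglongrightarrow> 0
      \<longleftrightarrow> (\<lambda>n. cumulant (F n) k g) \<longlonglongrightarrow> 0" for k g
    by (rule tendsto_cong)
      (use eventually_gt_at_top[of 0] in \<open>eventually_elim, simp only: F_def scaled_kappa_eq_cumulant[where M="\<lambda>n. Mrho (\<rho> n) n"]\<close>)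
  have "(\<forall>k\<ge>1. moments_factorize F c {1..r} k) \<longleftrightarrow> (\<forall>k\<ge>2. cumulants_vanish F {1..r} k)"
    using single by (rule moments_factorize_iff_cumulants_vanish)
  then show ?thesis
    unfolding moments_factorize_def cumulants_vanish_def moments cumulants .
qed

end
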